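(* The monads $\mathbb J=(J,\eta,\psi)$ and $\mathbb I=(I,\eta,\zeta)$ are not isomorphic; that is, there is no natural isomorphism $k\colon I\to J$ of functors with $k\circ\eta=\eta$ and $k_X\circ\zeta_X=\psi_X\circ J(k_X)\circ k_{I(X)}$ for all $X$.
   Context: A max-min measure on a compact Hausdorff space $X$ is a functional $\mu\colon C(X)\to\mathbb R$ (not assumed continuous) with $\mu(c_X)=c$ for constants, $\mu(\varphi\vee\psi)=\mu(\varphi)\vee\mu(\psi)$, $\mu(c\wedge\varphi)=c\wedge\mu(\varphi)$ for $c\in\mathbb R$. A max-plus (idempotent) measure is a functional $\mu\colon C(X)\to\mathbb R$ with $\mu(c_X)=c$, $\mu(\varphi\vee\psi)=\mu(\varphi)\vee\mu(\psi)$, $\mu(c_X+\varphi)=c+\mu(\varphi)$. $J(X)$, $I(X)$ are the respective sets with the topology of pointwise convergence on $C(X)$; on maps, $J(f)(\mu)=\mu(\cdot\circ f)$, $I(f)(\mu)=\mu(\cdot\circ f)$. In both monads the unit is $\eta_X(x)=\delta_x$, $\delta_x(\varphi)=\varphi(x)$. The multiplications are $\psi_X\colon J(J(X))\to J(X)$, $\psi_X(M)(\varphi)=M(\bar\varphi)$, and $\zeta_X\colon I(I(X))\to I(X)$, $\zeta_X(M)(\varphi)=M(\bar\varphi)$, where $\bar\varphi(\mu)=\mu(\varphi)$; in particular $\zeta_X(\vee_{i=1}^n(\beta_i+\delta_{\mu_i}))=\vee_{i=1}^n(\beta_i+\mu_i)$ for $\beta_i\in[-\infty,0]$ with $\max_i\beta_i=0$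 and $\mu_i\in I(X)$, and $\psi_X(\vee_{i=1}^n(\alpha_i\wedge\delta_{\mu_i}))=\vee_{i=1}^n(\alpha_i\wedge\mu_i)$ for $\alpha_i\in\mathbb R\cup\{\infty\}$ with $\max_i\alpha_i=\infty$, $\mu_i\in J(X)$. The monads are considered on the category $\mathbf{Comp}$ of compact Hausdorff spaces. *)

theory Defs
  imports "HOL-Analysis.Analysis" "HOL-Library.Infinite_Typeclass"
begin

definition CH :: "'a topology \<Rightarrow> bool" where
  "CH X \<longleftrightarrow> compact_space X \<and> Hausdorff_space X"

text \<open>C(X): continuous real functions on X, normalised to be extensional on the
  carrier, so that distinct elements are distinct functions on the space.\<close>
definition Cfun :: "'a topology \<Rightarrow> ('a \<Rightarrow> real) set" where
  "Cfun X = {\<phi>. continuous_map X euclideanreal \<phi> \<and> \<phi> \<in> extensional (topspace X)}"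

definition constX :: "'a topology \<Rightarrow> real \<Rightarrow> ('a \<Rightarrow> real)" where
  "constX X c = restrict (\<lambda>_. c) (topspace X)"

definition supX :: "'a topology \<Rightarrow> ('a \<Rightarrow> real) \<Rightarrow> ('a \<Rightarrow> real) \<Rightarrow> ('a \<Rightarrow> real)" where
  "supX X \<phi> \<psi> = restrict (\<lambda>x. max (\<phi> x) (\<psi> x)) (topspace X)"

definition addX :: "'a topology \<Rightarrow> real \<Rightarrow> ('a \<Rightarrow> real) \<Rightarrow> ('a \<Rightarrow> real)" where
  "addX X c \<phi> = restrict (\<lambda>x. c + \<phi> x) (topspace X)"

definition minX :: "'a topology \<Rightarrow> real \<Rightarrow> ('a \<Rightarrow> real) \<Rightarrow> ('a \<Rightarrow> real)" where
  "minX X c \<phi> = restrict (\<lambda>x. min c (\<phi> x)) (topspace X)"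

definition Imeas :: "'a topology \<Rightarrow> (('a \<Rightarrow> real) \<Rightarrow> real) set" where
  "Imeas X = {\<mu>. \<mu> \<in> extensional (Cfun X) \<and>
     (\<forall>c. \<mu> (constX X c) = c) \<and>
     (\<forall>\<phi>\<in>Cfun X. \<forall>\<psi>\<in>Cfun X. \<mu> (supX X \<phi> \<psi>) = max (\<mu> \<phi>) (\<mu> \<psi>)) \<and>
     (\<forall>c. \<forall>\<phi>\<in>Cfun X. \<mu> (addX X c \<phi>) = c + \<mu> \<phi>)}"

definition Jmeas :: "'a topology \<Rightarrow> (('a \<Rightarrow> real) \<Rightarrow> real) set" where
  "Jmeas X = {\<mu>. \<mu> \<in> extensional (Cfun X) \<and>
     (\<forall>c. \<mu> (constX X c) = c) \<and>
     (\<forall>\<phi>\<in>Cfun X. \<forall>\<psi>\<in>Cfun X. \<mu> (supX X \<phi> \<psi>) = max (\<mu> \<phi>) (\<mu> \<psi>)) \<and>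
     (\<forall>c. \<forall>\<phi>\<in>Cfun X. \<mu> (minX X c \<phi>) = min c (\<mu> \<phi>))}"

definition IT :: "'a topology \<Rightarrow> (('a \<Rightarrow> real) \<Rightarrow> real) topology" where
  "IT X = subtopology (product_topology (\<lambda>_. euclideanreal) (Cfun X)) (Imeas X)"

definition JT :: "'a topology \<Rightarrow> (('a \<Rightarrow> real) \<Rightarrow> real) topology" where
  "JT X = subtopology (product_topology (\<lambda>_. euclideanreal) (Cfun X)) (Jmeas X)"

definition push :: "'a topology \<Rightarrow> 'b topology \<Rightarrow> ('a \<Rightarrow> 'b)
    \<Rightarrow> (('a \<Rightarrow> real) \<Rightarrow> real) \<Rightarrow> (('b \<Rightarrow> real) \<Rightarrow> real)" where
  "push X Y f \<mu> = restrict (\<lambda>\<phi>. \<mu> (restrict (\<phi> \<circ> f) (topspace X))) (Cfun Y)"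

definition dirac :: "'a topology \<Rightarrow> 'a \<Rightarrow> (('a \<Rightarrow> real) \<Rightarrow> real)" where
  "dirac X x = restrict (\<lambda>\<phi>. \<phi> x) (Cfun X)"

definition zeta :: "'a topology \<Rightarrow> (((('a \<Rightarrow> real) \<Rightarrow> real) \<Rightarrow> real) \<Rightarrow> real)
    \<Rightarrow> (('a \<Rightarrow> real) \<Rightarrow> real)" where
  "zeta X M = restrict (\<lambda>\<phi>. M (restrict (\<lambda>\<mu>. \<mu> \<phi>) (Imeas X))) (Cfun X)"

definition psi :: "'a topology \<Rightarrow> (((('a \<Rightarrow> real) \<Rightarrow> real) \<Rightarrow> real) \<Rightarrow> real)
    \<Rightarrow> (('a \<Rightarrow> real) \<Rightarrow> real)" where
  "psi X M = restrict (\<lambda>\<phi>. M (restrict (\<lambda>\<mu>. \<mu> \<phi>) (Jmeas X))) (Cfun X)"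

definition iso_unit_family ::
  "('a topology \<Rightarrow> (('a \<Rightarrow> real) \<Rightarrow> real) \<Rightarrow> (('a \<Rightarrow> real) \<Rightarrow> real)) \<Rightarrow> bool" where
  "iso_unit_family k \<longleftrightarrow> (\<forall>X. CH X \<longrightarrow>
      homeomorphic_map (IT X) (JT X) (k X) \<and>
      (\<forall>x\<in>topspace X. k X (dirac X x) = dirac X x))"

definition natural ::
  "('a topology \<Rightarrow> (('a \<Rightarrow> real) \<Rightarrow> real) \<Rightarrow> (('a \<Rightarrow> real) \<Rightarrow> real))
   \<Rightarrow> ('b topology \<Rightarrow> (('b \<Rightarrow> real) \<Rightarrow> real) \<Rightarrow> (('b \<Rightarrow> real) \<Rightarrow> real)) \<Rightarrow> bool" where
  "natural k1 k2 \<longleftrightarrow> (\<forall>X Y f. CH X \<and> CH Y \<and> continuous_map X Y f \<longrightarrow>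
      (\<forall>\<mu>\<in>Imeas X. k2 Y (push X Y f \<mu>) = push X Y f (k1 X \<mu>)))"

end

theory Submission
  imports Defs
begin

text \<open>On a two-point space \<open>{a, b}\<close> let \<open>m\<^sub>s = \<delta>\<^sub>a \<or> (s + \<delta>\<^sub>b)\<close>, and let \<open>g\<close> send
  \<open>a\<close> to \<open>\<delta>\<^sub>a\<close> and \<open>b\<close> to \<open>m\<^sub>s\<close>. In the max-plus monad weights add:
  \<open>\<zeta>(I(g)(m\<^sub>s)) = m\<^sub>2\<^sub>s\<close>. In the max-min monad the corresponding flattening is idempotent:
  \<open>\<psi>(J(h)(\<nu>)) = \<nu>\<close> when \<open>h\<close> sends \<open>a\<close> to \<open>\<delta>\<^sub>a\<close> and \<open>b\<close> to \<open>\<nu>\<close>, because a max-min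
  measure on two points does not notice when the value \<open>\<phi>(b)\<close> is replaced by \<open>\<nu>(\<phi>)\<close>.
  A monad isomorphism \<open>k\<close> would carry the first identity to the second, giving
  \<open>k(m\<^sub>2\<^sub>s) = k(m\<^sub>s)\<close> and contradicting injectivity of \<open>k\<close>.\<close>

lemma topspace_IT: "topspace (IT X) = Imeas X"
  by (auto simp: IT_def Imeas_def PiE_def)

lemma topspace_JT: "topspace (JT X) = Jmeas X"
  by (auto simp: JT_def Jmeas_def PiE_def)

lemma Cfun_discrete_topology: "Cfun (discrete_topology S) = extensional S"
  by (auto simp: Cfun_def)

lemma constX_Cfun: "constX X c \<in> Cfun X"
  by (auto simp: Cfun_def constX_def intro: continuous_map_eq[OF continuous_map_const[THEN iffD2]])

lemma supX_Cfun: "\<phi> \<in> Cfun X \<Longrightarrow> \<psi> \<in> Cfun X \<Longrightarrow> supX X \<phi> \<psi> \<in> Cfun X"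
  unfolding Cfun_def supX_def
  by (auto intro: continuous_map_eq[OF continuous_map_real_max])

lemma addX_Cfun: "\<phi> \<in> Cfun X \<Longrightarrow> addX X c \<phi> \<in> Cfun X"
  unfolding Cfun_def addX_def
  by (auto intro: continuous_map_eq[OF continuous_map_add[OF continuous_map_const[THEN iffD2]]])

lemma minX_Cfun: "\<phi> \<in> Cfun X \<Longrightarrow> minX X c \<phi> \<in> Cfun X"
  unfolding Cfun_def minX_def
  by (auto intro: continuous_map_eq[OF continuous_map_real_min[OF continuous_map_const[THEN iffD2]]])

lemma restrict_comp_Cfun:
  "continuous_map X Y f \<Longrightarrow> \<Phi> \<in> Cfun Y \<Longrightarrow> restrict (\<Phi> \<circ> f) (topspace X) \<in> Cfun X"
  unfolding Cfun_def by (auto intro: continuous_map_eq[OF continuous_map_compose])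

lemma evaluation_Cfun_IT: "\<phi> \<in> Cfun X \<Longrightarrow> restrict (\<lambda>\<mu>. \<mu> \<phi>) (Imeas X) \<in> Cfun (IT X)"
  unfolding Cfun_def[of "IT X"] topspace_IT
  by (auto simp: IT_def intro!: continuous_map_eq[OF continuous_map_from_subtopology[OF continuous_map_product_projection]])

lemma evaluation_Cfun_JT: "\<phi> \<in> Cfun X \<Longrightarrow> restrict (\<lambda>\<mu>. \<mu> \<phi>) (Jmeas X) \<in> Cfun (JT X)"
  unfolding Cfun_def[of "JT X"] topspace_JT
  by (auto simp: JT_def intro!: continuous_map_eq[OF continuous_map_from_subtopology[OF continuous_map_product_projection]])

lemma sup_preserving_mono:
  fixes \<mu> :: "('a \<Rightarrow> real) \<Rightarrow> real"
  assumes "\<forall>\<phi>\<in>Cfun X. \<forall>\<psi>\<in>Cfun X. \<mu> (supX X \<phi> \<psi>) = max (\<mu> \<phi>) (\<mu> \<psi>)"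
    and "\<phi> \<in> Cfun X" "\<psi> \<in> Cfun X" "\<And>x. x \<in> topspace X \<Longrightarrow> \<phi> x \<le> \<psi> x"
  shows "\<mu> \<phi> \<le> \<mu> \<psi>"
proof -
  have "supX X \<phi> \<psi> = \<psi>"
  proof
    fix x show "supX X \<phi> \<psi> x = \<psi> x"
      using assms(3,4) by (cases "x \<in> topspace X") (auto simp: supX_def Cfun_def extensional_def)
  qed
  then have "\<mu> \<psi> = max (\<mu> \<phi>) (\<mu> \<psi>)" using assms(1-3) by metis
  then show ?thesis by (metis max.cobounded1)
qed

lemma Imeas_bounds:
  assumes "\<mu> \<in> Imeas X" "\<phi> \<in> Cfun X" "\<And>x. x \<in> topspace X \<Longrightarrow> \<bar>\<phi> x\<bar> \<le> B"
  shows "\<bar>\<mu> \<phi>\<bar> \<le> B"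
proof -
  have sup: "\<forall>\<phi>\<in>Cfun X. \<forall>\<psi>\<in>Cfun X. \<mu> (supX X \<phi> \<psi>) = max (\<mu> \<phi>) (\<mu> \<psi>)"
    and const: "\<And>c. \<mu> (constX X c) = c"
    using assms(1) by (auto simp: Imeas_def)
  have "\<mu> (constX X (- B)) \<le> \<mu> \<phi>"
    by (rule sup_preserving_mono[OF sup constX_Cfun assms(2)])
       (use assms(3) in \<open>force simp: constX_def abs_le_iff\<close>)
  moreover have "\<mu> \<phi> \<le> \<mu> (constX X B)"
    by (rule sup_preserving_mono[OF sup assms(2) constX_Cfun])
       (use assms(3) in \<open>force simp: constX_def abs_le_iff\<close>)
  ultimately show ?thesis by (simp add: const)
qed

lemma continuous_map_real_bounded:
  assumes "compact_space X" "continuous_map X euclideanreal \<phi>"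
  obtains B where "\<And>x. x \<in> topspace X \<Longrightarrow> \<bar>\<phi> x\<bar> \<le> B"
proof -
  have "compact (\<phi> ` topspace X)"
    using image_compactin[of X "topspace X" euclideanreal \<phi>] assms
    by (simp add: compact_space_def)
  then show ?thesis
    using that compact_imp_bounded bounded_real by (metis image_eqI)
qed

lemma closedin_common_equalizer:
  assumes "\<And>i. i \<in> I \<Longrightarrow> continuous_map T euclideanreal (F i)"
    "\<And>i. i \<in> I \<Longrightarrow> continuous_map T euclideanreal (G i)"
  shows "closedin T {x \<in> topspace T. \<forall>i\<in>I. F i x = G i x}"
proof (cases "I = {}")
  case False
  have "{x \<in> topspace T. \<forall>i\<in>I. F i x = G i x} = (\<Inter>i\<in>I. {x \<in> topspace T. F i x = G i x})"
    using False by auto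
  also have "closedin T \<dots>"
    using False assms closedin_continuous_maps_eq[of euclideanreal T "F _" "G _"] by auto
  finally show ?thesis .
qed simp

lemma closedin_Imeas: "closedin (product_topology (\<lambda>_. euclideanreal) (Cfun X)) (Imeas X)"
proof -
  let ?P = "product_topology (\<lambda>_. euclideanreal) (Cfun X)"
  have eval: "continuous_map ?P euclideanreal (\<lambda>\<mu>. \<mu> \<phi>)" if "\<phi> \<in> Cfun X" for \<phi>
    using continuous_map_product_projection[OF that, of "\<lambda>_. euclideanreal"] by simp
  have "Imeas X = {\<mu> \<in> topspace ?P. \<forall>c\<in>UNIV. \<mu> (constX X c) = c}
     \<inter> {\<mu> \<in> topspace ?P. \<forall>p\<in>Cfun X \<times> Cfun X.
        \<mu> (supX X (fst p) (snd p)) = max (\<mu> (fst p)) (\<mu> (snd p))}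
     \<inter> {\<mu> \<in> topspace ?P. \<forall>p\<in>UNIV \<times> Cfun X.
        \<mu> (addX X (fst p) (snd p)) = fst p + \<mu> (snd p)}"
    by (auto simp: Imeas_def PiE_def)
  also have "closedin ?P \<dots>"
  proof (intro closedin_Int)
    show "closedin ?P {\<mu> \<in> topspace ?P. \<forall>c\<in>UNIV. \<mu> (constX X c) = c}"
      by (rule closedin_common_equalizer[of _ _ "\<lambda>c \<mu>. \<mu> (constX X c)" "\<lambda>c _. c"])
         (auto intro: eval constX_Cfun)
    show "closedin ?P {\<mu> \<in> topspace ?P. \<forall>p\<in>Cfun X \<times> Cfun X.
        \<mu> (supX X (fst p) (snd p)) = max (\<mu> (fst p)) (\<mu> (snd p))}"
      by (rule closedin_common_equalizer[of _ _ "\<lambda>p \<mu>. \<mu> (supX X (fst p) (snd p))"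
            "\<lambda>p \<mu>. max (\<mu> (fst p)) (\<mu> (snd p))"])
         (auto intro!: eval supX_Cfun continuous_map_real_max)
    show "closedin ?P {\<mu> \<in> topspace ?P. \<forall>p\<in>UNIV \<times> Cfun X.
        \<mu> (addX X (fst p) (snd p)) = fst p + \<mu> (snd p)}"
      by (rule closedin_common_equalizer[of _ _ "\<lambda>p \<mu>. \<mu> (addX X (fst p) (snd p))"
            "\<lambda>p \<mu>. fst p + \<mu> (snd p)"])
         (auto intro!: eval addX_Cfun continuous_map_add)
  qed
  finally show ?thesis .
qed

lemma CH_IT:
  assumes "compact_space X"
  shows "CH (IT X)"
proof -
  let ?P = "product_topology (\<lambda>_. euclideanreal) (Cfun X)"
  have "\<forall>\<phi>\<in>Cfun X. \<exists>B. \<forall>x\<in>topspace X. \<bar>\<phi> x\<bar> \<le> B"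
    using continuous_map_real_bounded[OF assms] by (metis Cfun_def mem_Collect_eq)
  then obtain B where B: "\<And>\<phi> x. \<phi> \<in> Cfun X \<Longrightarrow> x \<in> topspace X \<Longrightarrow> \<bar>\<phi> x\<bar> \<le> B \<phi>"
    by metis
  have "Imeas X \<subseteq> PiE (Cfun X) (\<lambda>\<phi>. {- B \<phi> .. B \<phi>})"
  proof
    fix \<mu> assume \<mu>: "\<mu> \<in> Imeas X"
    then have "\<mu> \<phi> \<in> {- B \<phi> .. B \<phi>}" if "\<phi> \<in> Cfun X" for \<phi>
      using Imeas_bounds[OF \<mu> that B[OF that]] by (simp add: abs_le_iff)
    moreover have "\<mu> \<in> extensional (Cfun X)" using \<mu> by (simp add: Imeas_def)
    ultimately show "\<mu> \<in> PiE (Cfun X) (\<lambda>\<phi>. {- B \<phi> .. B \<phi>})" by (simp add: PiE_def)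
  qed
  moreover have "compactin ?P (PiE (Cfun X) (\<lambda>\<phi>. {- B \<phi> .. B \<phi>}))"
    by (simp add: compactin_PiE)
  ultimately have "compact_space (IT X)"
    unfolding IT_def by (intro compact_space_subtopology closed_compactin[OF _ _ closedin_Imeas])
  moreover have "Hausdorff_space (IT X)"
    unfolding IT_def by (simp add: Hausdorff_space_subtopology Hausdorff_space_product_topology)
  ultimately show ?thesis by (simp add: CH_def)
qed

lemma dirac_Imeas: "x \<in> topspace X \<Longrightarrow> dirac X x \<in> Imeas X"
  using constX_Cfun[of X] supX_Cfun[of _ X] addX_Cfun[of _ X]
  by (auto simp: Imeas_def dirac_def constX_def supX_def addX_def)

lemma dirac_Jmeas: "x \<in> topspace X \<Longrightarrow> dirac X x \<in> Jmeas X"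
  using constX_Cfun[of X] supX_Cfun[of _ X] minX_Cfun[of _ X]
  by (auto simp: Jmeas_def dirac_def constX_def supX_def minX_def)

definition maxplus_pair :: "'a topology \<Rightarrow> 'a \<Rightarrow> real \<Rightarrow> 'a \<Rightarrow> ('a \<Rightarrow> real) \<Rightarrow> real" where
  "maxplus_pair X p t q = restrict (\<lambda>\<phi>. max (\<phi> p) (t + \<phi> q)) (Cfun X)"

lemma maxplus_pair_Imeas:
  assumes "p \<in> topspace X" "q \<in> topspace X" "t \<le> 0"
  shows "maxplus_pair X p t q \<in> Imeas X"
  using assms constX_Cfun[of X] supX_Cfun[of _ X] addX_Cfun[of _ X]
  by (auto simp: Imeas_def maxplus_pair_def constX_def supX_def addX_def)

lemma push_maxplus_pair:
  assumes "continuous_map X Y g" "p \<in> topspace X" "q \<in> topspace X"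
  shows "push X Y g (maxplus_pair X p t q) = maxplus_pair Y (g p) t (g q)"
  using assms restrict_comp_Cfun[OF assms(1)] by (auto simp: push_def maxplus_pair_def)

lemma zeta_maxplus_pair:
  assumes "\<mu>\<^sub>1 \<in> Imeas X" "\<mu>\<^sub>2 \<in> Imeas X"
  shows "zeta X (maxplus_pair (IT X) \<mu>\<^sub>1 t \<mu>\<^sub>2) = restrict (\<lambda>\<phi>. max (\<mu>\<^sub>1 \<phi>) (t + \<mu>\<^sub>2 \<phi>)) (Cfun X)"
proof
  fix \<phi>
  show "zeta X (maxplus_pair (IT X) \<mu>\<^sub>1 t \<mu>\<^sub>2) \<phi> = restrict (\<lambda>\<phi>. max (\<mu>\<^sub>1 \<phi>) (t + \<mu>\<^sub>2 \<phi>)) (Cfun X) \<phi>"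
    using assms evaluation_Cfun_IT[of \<phi> X] by (simp add: zeta_def maxplus_pair_def)
qed

lemma zeta_maxplus_pair_dirac:
  assumes "a \<in> topspace X" "b \<in> topspace X" "t \<le> 0" "s \<le> 0"
  shows "zeta X (maxplus_pair (IT X) (dirac X a) t (maxplus_pair X a s b)) = maxplus_pair X a (t + s) b"
  using assms by (auto simp: zeta_maxplus_pair dirac_Imeas maxplus_pair_Imeas)
    (auto simp: maxplus_pair_def dirac_def max_def)

lemma maxplus_pair_weight_inj:
  assumes "a \<in> S" "b \<in> S" "a \<noteq> b"
    and "maxplus_pair (discrete_topology S) a s b = maxplus_pair (discrete_topology S) a t b"
  shows "s = t"
proof -
  define \<phi> where "\<phi> = restrict (\<lambda>x. if x = a then min s t - 1 else 0) S"
  have "\<phi> \<in> Cfun (discrete_topology S)" by (simp add: Cfun_discrete_topology \<phi>_def)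
  moreover have "maxplus_pair (discrete_topology S) a s b \<phi> = maxplus_pair (discrete_topology S) a t b \<phi>"
    using assms(4) by simp
  ultimately show ?thesis
    using assms(1-3) by (simp add: maxplus_pair_def \<phi>_def max_def restrict_apply split: if_splits)
qed

lemma push_comp:
  assumes "continuous_map X Y g" "continuous_map Y Z f"
  shows "push Y Z f (push X Y g \<mu>) = push X Z (f \<circ> g) \<mu>"
proof
  fix \<Phi> :: "_ \<Rightarrow> real"
  have "restrict (restrict (\<Phi> \<circ> f) (topspace Y) \<circ> g) (topspace X) = restrict (\<Phi> \<circ> (f \<circ> g)) (topspace X)"
    using continuous_map_image_subset_topspace[OF assms(1)] by (auto simp: fun_eq_iff)
  then show "push Y Z f (push X Y g \<mu>) \<Phi> = push X Z (f \<circ> g) \<mu> \<Phi>"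
    using restrict_comp_Cfun[OF assms(2)] by (simp add: push_def)
qed

lemma psi_push:
  assumes "continuous_map Z (JT X) h" "\<phi> \<in> Cfun X"
  shows "psi X (push Z (JT X) h \<nu>) \<phi> = \<nu> (restrict (\<lambda>z. h z \<phi>) (topspace Z))"
proof -
  have "restrict (restrict (\<lambda>\<mu>. \<mu> \<phi>) (Jmeas X) \<circ> h) (topspace Z) = restrict (\<lambda>z. h z \<phi>) (topspace Z)"
    using continuous_map_image_subset_topspace[OF assms(1)] by (auto simp: fun_eq_iff topspace_JT)
  then show ?thesis
    using assms evaluation_Cfun_JT[OF assms(2)] by (simp add: psi_def push_def)
qed

lemma Jmeas_two_point_absorb:
  assumes "a \<noteq> b" and \<nu>: "\<nu> \<in> Jmeas (discrete_topology {a, b})"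
    and \<phi>: "\<phi> \<in> Cfun (discrete_topology {a, b})"
  shows "\<nu> (restrict (\<lambda>x. if x = a then \<phi> a else \<nu> \<phi>) {a, b}) = \<nu> \<phi>"
proof -
  let ?X = "discrete_topology {a, b}"
  define c where "c = \<nu> \<phi>"
  define h where "h = restrict (\<lambda>x. if x = a then \<phi> a else c) {a, b}"
  have sup: "\<forall>\<phi>\<in>Cfun ?X. \<forall>\<psi>\<in>Cfun ?X. \<nu> (supX ?X \<phi> \<psi>) = max (\<nu> \<phi>) (\<nu> \<psi>)"
    and min: "\<And>r. \<nu> (minX ?X r \<phi>) = min r (\<nu> \<phi>)"
    and const: "\<And>r. \<nu> (constX ?X r) = r"
    using \<nu> \<phi> by (auto simp: Jmeas_def)
  have \<phi>_ext: "\<phi> \<in> extensional {a, b}" using \<phi> by (simp add: Cfun_discrete_topology)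
  have "\<nu> (constX ?X (min (\<phi> a) (\<phi> b))) \<le> \<nu> \<phi>"
    by (rule sup_preserving_mono[OF sup constX_Cfun \<phi>]) (auto simp: constX_def)
  moreover have "\<nu> \<phi> \<le> \<nu> (constX ?X (max (\<phi> a) (\<phi> b)))"
    by (rule sup_preserving_mono[OF sup \<phi> constX_Cfun]) (auto simp: constX_def)
  ultimately
  have c_between: "min (\<phi> a) (\<phi> b) \<le> c" "c \<le> max (\<phi> a) (\<phi> b)"
    by (simp_all add: const c_def)
  consider "\<phi> a \<le> c" "c \<le> \<phi> b" | "c = \<phi> a" | "\<phi> b \<le> c" "c \<le> \<phi> a"
    using c_between by linarith
  then have "\<nu> h = c"
  proof cases
    case 1
    then have "h = minX ?X c \<phi>"
      using \<phi>_ext by (auto simp: h_def minX_def extensional_def fun_eq_iff min_def)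
    then show ?thesis by (simp add: min c_def)
  next
    case 2
    then have "h = constX ?X c" by (auto simp: h_def constX_def)
    then show ?thesis by (simp add: const)
  next
    case 3
    then have "h = supX ?X \<phi> (constX ?X c)"
      using \<phi>_ext by (auto simp: h_def supX_def constX_def extensional_def fun_eq_iff max_def)
    then show ?thesis using sup \<phi> constX_Cfun[of ?X c] by (simp add: const c_def)
  qed
  then show ?thesis unfolding h_def c_def .
qed

lemma psi_push_two_point:
  assumes "a \<noteq> b" "\<nu> \<in> Jmeas (discrete_topology {a, b})"
    and "h a = dirac (discrete_topology {a, b}) a" "h b = \<nu>"
  shows "psi (discrete_topology {a, b}) (push (discrete_topology {a, b}) (JT (discrete_topology {a, b})) h \<nu>) = \<nu>"
proof
  let ?X = "discrete_topology {a, b}"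
  fix \<phi>
  show "psi ?X (push ?X (JT ?X) h \<nu>) \<phi> = \<nu> \<phi>"
  proof (cases "\<phi> \<in> Cfun ?X")
    case True
    have "continuous_map ?X (JT ?X) h"
      using assms dirac_Jmeas[of a ?X] by (simp add: topspace_JT)
    from psi_push[OF this True]
    have "psi ?X (push ?X (JT ?X) h \<nu>) \<phi> = \<nu> (restrict (\<lambda>z. h z \<phi>) {a, b})"
      by simp
    also have "restrict (\<lambda>z. h z \<phi>) {a, b} = restrict (\<lambda>x. if x = a then \<phi> a else \<nu> \<phi>) {a, b}"
      using assms True by (auto simp: dirac_def)
    also have "\<nu> \<dots> = \<nu> \<phi>"
      by (rule Jmeas_two_point_absorb[OF assms(1,2) True])
    finally show ?thesis .
  next
    case False
    then show ?thesis using assms(2) by (simp add: psi_def Jmeas_def extensional_def)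
  qed
qed

lemma monad_iso_absorbs_weight:
  assumes iso: "iso_unit_family k" and nat: "natural k k'"
    and law: "\<forall>X. CH X \<longrightarrow> (\<forall>M\<in>Imeas (IT X).
                k X (zeta X M) = psi X (push (IT X) (JT X) (k X) (k' (IT X) M)))"
    and ab: "a \<noteq> b" and "s \<le> 0"
  shows "k (discrete_topology {a, b}) (maxplus_pair (discrete_topology {a, b}) a (s + s) b)
       = k (discrete_topology {a, b}) (maxplus_pair (discrete_topology {a, b}) a s b)"
proof -
  let ?X = "discrete_topology {a, b}"
  define m where "m = maxplus_pair ?X a s b"
  define g where "g x = (if x = a then dirac ?X a else m)" for x
  define \<nu> where "\<nu> = k ?X m"
  have CH: "CH ?X" "CH (IT ?X)"
    using CH_IT[of ?X] by (auto simp: CH_def compact_space_discrete_topology)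
  have m_I: "m \<in> Imeas ?X"
    using \<open>s \<le> 0\<close> by (simp add: m_def maxplus_pair_Imeas)
  have g: "continuous_map ?X (IT ?X) g"
    using ab m_I dirac_Imeas[of a ?X] by (simp add: g_def topspace_IT)
  have k: "homeomorphic_map (IT ?X) (JT ?X) (k ?X)" "k ?X (dirac ?X a) = dirac ?X a"
    using iso CH by (auto simp: iso_unit_family_def)
  have \<nu>_J: "\<nu> \<in> Jmeas ?X"
    using continuous_map_image_subset_topspace[OF homeomorphic_imp_continuous_map[OF k(1)]] m_I
    by (auto simp: \<nu>_def topspace_IT topspace_JT)
  have M: "push ?X (IT ?X) g m = maxplus_pair (IT ?X) (dirac ?X a) s m"
    unfolding m_def using push_maxplus_pair[OF g] ab by (simp add: g_def m_def)
  have M_I: "push ?X (IT ?X) g m \<in> Imeas (IT ?X)"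
    unfolding M using m_I dirac_Imeas[of a ?X] \<open>s \<le> 0\<close> by (simp add: maxplus_pair_Imeas topspace_IT)
  have "k ?X (maxplus_pair ?X a (s + s) b) = k ?X (zeta ?X (push ?X (IT ?X) g m))"
    unfolding M using \<open>s \<le> 0\<close> by (simp add: m_def zeta_maxplus_pair_dirac)
  also have "\<dots> = psi ?X (push (IT ?X) (JT ?X) (k ?X) (k' (IT ?X) (push ?X (IT ?X) g m)))"
    using law CH(1) M_I by blast
  also have "\<dots> = psi ?X (push (IT ?X) (JT ?X) (k ?X) (push ?X (IT ?X) g \<nu>))"
    using nat CH g m_I by (simp add: natural_def \<nu>_def)
  also have "\<dots> = psi ?X (push ?X (JT ?X) (k ?X \<circ> g) \<nu>)"
    by (simp only: push_comp[OF g homeomorphic_imp_continuous_map[OF k(1)]])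
  also have "\<dots> = \<nu>"
    by (rule psi_push_two_point[OF ab \<nu>_J]) (use ab in \<open>simp_all add: g_def k(2) \<nu>_def\<close>)
  finally show ?thesis by (simp add: \<nu>_def m_def)
qed

theorem mainTheorem17:
  fixes k :: "('a::infinite) topology \<Rightarrow> (('a \<Rightarrow> real) \<Rightarrow> real) \<Rightarrow> (('a \<Rightarrow> real) \<Rightarrow> real)"
    and k' :: "(('a \<Rightarrow> real) \<Rightarrow> real) topology
               \<Rightarrow> (((('a \<Rightarrow> real) \<Rightarrow> real) \<Rightarrow> real) \<Rightarrow> real)
               \<Rightarrow> (((('a \<Rightarrow> real) \<Rightarrow> real) \<Rightarrow> real) \<Rightarrow> real)"
  shows "\<not> (iso_unit_family k \<and> iso_unit_family k' \<and>
            natural k k \<and> natural k k' \<and> natural k' k \<and> natural k' k' \<and>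
            (\<forall>X. CH X \<longrightarrow> (\<forall>M\<in>Imeas (IT X).
                k X (zeta X M) = psi X (push (IT X) (JT X) (k X) (k' (IT X) M)))))"
proof
  assume H: "iso_unit_family k \<and> iso_unit_family k' \<and>
            natural k k \<and> natural k k' \<and> natural k' k \<and> natural k' k' \<and>
            (\<forall>X. CH X \<longrightarrow> (\<forall>M\<in>Imeas (IT X).
                k X (zeta X M) = psi X (push (IT X) (JT X) (k X) (k' (IT X) M))))"
  obtain a b :: 'a where ab: "a \<noteq> b"
    using ex_new_if_finite[OF infinite_UNIV, of "{undefined}"] by blast
  let ?X = "discrete_topology {a, b}"
  let ?m = "\<lambda>t. maxplus_pair ?X a t b"
  have "k ?X (?m (-2)) = k ?X (?m (-1))"
    using monad_iso_absorbs_weight[of k k' a b "-1"] H ab by simp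
  moreover have "homeomorphic_map (IT ?X) (JT ?X) (k ?X)"
    using H by (simp add: iso_unit_family_def CH_def compact_space_discrete_topology)
  then have "inj_on (k ?X) (Imeas ?X)"
    using homeomorphic_imp_injective_map topspace_IT by metis
  ultimately have "?m (-2) = ?m (-1)"
    by (auto dest: inj_onD simp: maxplus_pair_Imeas)
  then show False
    using maxplus_pair_weight_inj[of a "{a, b}" b "-2" "-1"] ab by simp
qed

end
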